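(* Let $S$ be a Foulis semigroup and $s\in S$ a self-adjoint idempotent ($s\cdot s=s=s^\dagger$). Then $\mathrm{End}(s)=\{t\in S: s\cdot t=t=t\cdot s\}$, with multiplication of $S$, unit $s$, involution $\dagger$, and $[t]_s=s\cdot[t]\cdot s$, is a Foulis semigroup; it coincides with the endomorphism Foulis semigroup of the object $s$ in the dagger kernel category $\mathrm{Kar}_\dagger(S)$. For $s=1$ one recovers $\mathrm{End}(1)=S$.
   Context: A Foulis semigroup is a monoid $(S,\cdot,1)$ with maps $(-)^\dagger:S\to S$ and $[-]:S\to S$ such that: (1) $1^\dagger=1$, $(s\cdot t)^\dagger=t^\dagger\cdot s^\dagger$, $s^{\dagger\dagger}=s$; (2) $[s]\cdot[s]=[s]=[s]^\dagger$; (3) $0:=[1]$ satisfies $0\cdot s=0=s\cdot 0$ for all $s$; (4) for all $s,x$: $s\cdot x=0$ iff $x=[s]\cdot y$ for some $y\in S$. $\mathrm{Kar}_\dagger(S)$ is the category whose objects are self-adjoint idempotents of $S$, whose morphisms $f:s\to t$ are elements $f\in S$ with $f\cdot s=f=t\cdot f$, with composition the multiplication, identity on $s$ equal to $s$, dagger the involution; it is a dagger kernel category in which the kernel of $f:s\to t$ is $s\cdot[f]$. In a dagger kernel category the endomorphisms of an object form a Foulis semigroup with $[u]=\ker(u)\circ\ker(u)^\dagger$. *)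

theory Defs
  imports Main
begin

text \<open>A Foulis semigroup on a carrier set C, with multiplication m, unit e,
  involution d (dagger) and bracket b.  The zero is b e.\<close>
definition foulis :: "'a set \<Rightarrow> ('a \<Rightarrow> 'a \<Rightarrow> 'a) \<Rightarrow> 'a \<Rightarrow> ('a \<Rightarrow> 'a) \<Rightarrow> ('a \<Rightarrow> 'a) \<Rightarrow> bool" where
  "foulis C m e d b \<longleftrightarrow>
     e \<in> C \<and> (\<forall>x\<in>C. \<forall>y\<in>C. m x y \<in> C) \<and> (\<forall>x\<in>C. d x \<in> C \<and> b x \<in> C) \<and>
     (\<forall>x\<in>C. \<forall>y\<in>C. \<forall>z\<in>C. m (m x y) z = m x (m y z)) \<and>
     (\<forall>x\<in>C. m e x = x \<and> m x e = x) \<and>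
     d e = e \<and> (\<forall>x\<in>C. \<forall>y\<in>C. d (m x y) = m (d y) (d x)) \<and> (\<forall>x\<in>C. d (d x) = x) \<and>
     (\<forall>x\<in>C. m (b x) (b x) = b x \<and> b x = d (b x)) \<and>
     (\<forall>x\<in>C. m (b e) x = b e \<and> m x (b e) = b e) \<and>
     (\<forall>x\<in>C. \<forall>y\<in>C. m x y = b e \<longleftrightarrow> (\<exists>z\<in>C. y = m (b x) z))"

definition End_set :: "('a \<Rightarrow> 'a \<Rightarrow> 'a) \<Rightarrow> 'a \<Rightarrow> 'a set" where
  "End_set m s = {t. m s t = t \<and> m t s = t}"

definition kar_obj :: "('a \<Rightarrow> 'a \<Rightarrow> 'a) \<Rightarrow> ('a \<Rightarrow> 'a) \<Rightarrow> 'a \<Rightarrow> bool" where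
  "kar_obj m d s \<longleftrightarrow> m s s = s \<and> d s = s"

definition kar_hom :: "('a \<Rightarrow> 'a \<Rightarrow> 'a) \<Rightarrow> 'a \<Rightarrow> 'a \<Rightarrow> 'a \<Rightarrow> bool" where
  "kar_hom m s t f \<longleftrightarrow> m f s = f \<and> m t f = f"

text \<open>k : p \<rightarrow> s is a dagger kernel of u : s \<rightarrow> t in Kar_dagger(S).
  Zero morphisms in Kar_dagger(S) are the element z = 0 of S.\<close>
definition kar_dkernel :: "('a \<Rightarrow> 'a \<Rightarrow> 'a) \<Rightarrow> ('a \<Rightarrow> 'a) \<Rightarrow> 'a \<Rightarrow>
    'a \<Rightarrow> 'a \<Rightarrow> 'a \<Rightarrow> 'a \<Rightarrow> 'a \<Rightarrow> bool" where
  "kar_dkernel m d z s t u p k \<longleftrightarrow>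
     kar_obj m d p \<and> kar_hom m p s k \<and> m u k = z \<and> m (d k) k = p \<and>
     (\<forall>q g. kar_obj m d q \<and> kar_hom m q s g \<and> m u g = z \<longrightarrow>
        (\<exists>!h. kar_hom m q p h \<and> m k h = g))"

text \<open>Bracket of the endomorphism Foulis semigroup of object s in a dagger kernel
  category: [u] = ker(u) \<circ> ker(u)^dagger, for a (chosen) dagger kernel of u.\<close>
definition kar_end_bracket :: "('a \<Rightarrow> 'a \<Rightarrow> 'a) \<Rightarrow> ('a \<Rightarrow> 'a) \<Rightarrow> 'a \<Rightarrow> 'a \<Rightarrow> 'a \<Rightarrow> 'a" where
  "kar_end_bracket m d z s u =
     (SOME x. \<exists>p k. kar_dkernel m d z s s u p k \<and> x = m k (d k))"

end

theory Submission
  imports Defs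
begin

(* The one non-formal fact is that [t] commutes with s whenever
   t s = t: from t (s [t]) = t [t] = 0 the kernel axiom gives s [t] = [t] z, hence
   s [t] = [t] s [t] is self-adjoint, i.e. s [t] = [t] s.  Consequently, on
   End(s) the bracket [t]_s = s [t] s equals s [t] and is a self-adjoint
   idempotent, from which the Foulis axioms of End(s) follow directly.
   For the comparison with Kar_dagger(S) we show that p = s [u] is itself a dagger
   kernel p : p -> s of u : s -> s (every g with u g = 0 and s g = g already
   satisfies p g = g), and that k k-dagger = p for EVERY dagger kernel k of u, so
   the chosen kernel in the definition of the categorical bracket gives p.
   The file first collects the consequences of the Foulis axioms in a locale,
   then proves the End(s) results in an extension fixing s, and finally derives
   the theorem, the case s = 1 being immediate from the unit laws. *)

locale foulis_semigroup =
  fixes mult :: "'a \<Rightarrow> 'a \<Rightarrow> 'a" (infixl "\<cdot>" 70)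
    and e :: 'a and d :: "'a \<Rightarrow> 'a" and b :: "'a \<Rightarrow> 'a"
  assumes foulis: "foulis UNIV (\<cdot>) e d b"
begin

abbreviation zero :: 'a where "zero \<equiv> b e"

lemma assoc: "x \<cdot> y \<cdot> z = x \<cdot> (y \<cdot> z)"
  and unit_left: "e \<cdot> x = x" and unit_right: "x \<cdot> e = x"
  and dagger_mult: "d (x \<cdot> y) = d y \<cdot> d x" and dagger_dagger: "d (d x) = x"
  and bracket_idem: "b x \<cdot> b x = b x" and bracket_self_adjoint: "d (b x) = b x"
  and zero_left: "zero \<cdot> x = zero" and zero_right: "x \<cdot> zero = zero"
  and kernel_iff: "x \<cdot> y = zero \<longleftrightarrow> (\<exists>z. y = b x \<cdot> z)"
  using foulis unfolding foulis_def by auto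

lemma mult_bracket: "x \<cdot> b x = zero"
  using kernel_iff[of x "b x"] unit_right by metis

lemma bracket_fixes: "x \<cdot> y = zero \<longleftrightarrow> b x \<cdot> y = y"
proof
  assume "x \<cdot> y = zero"
  then obtain z where "y = b x \<cdot> z" using kernel_iff by blast
  then show "b x \<cdot> y = y" using bracket_idem by (simp flip: assoc)
next
  assume "b x \<cdot> y = y"
  then show "x \<cdot> y = zero" using kernel_iff by metis
qed

end

locale foulis_projection = foulis_semigroup +
  fixes s :: 'a
  assumes proj_idem: "s \<cdot> s = s" and proj_self_adjoint: "d s = s"
begin

lemma End_iff: "t \<in> End_set (\<cdot>) s \<longleftrightarrow> s \<cdot> t = t \<and> t \<cdot> s = t"
  by (simp add: End_set_def)

lemma bracket_commutes:
  assumes "t \<cdot> s = t"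
  shows "s \<cdot> b t = b t \<cdot> s"
proof -
  have "t \<cdot> (s \<cdot> b t) = zero" using assms mult_bracket by (metis assoc)
  then have fix_st: "b t \<cdot> (s \<cdot> b t) = s \<cdot> b t" using bracket_fixes by blast
  have "d (b t \<cdot> (s \<cdot> b t)) = b t \<cdot> (s \<cdot> b t)"
    by (simp add: dagger_mult bracket_self_adjoint proj_self_adjoint assoc)
  then have "d (s \<cdot> b t) = s \<cdot> b t" using fix_st by simp
  moreover have "d (s \<cdot> b t) = b t \<cdot> s"
    by (simp add: dagger_mult bracket_self_adjoint proj_self_adjoint)
  ultimately show ?thesis by simp
qed

lemma End_bracket_eq:
  assumes "t \<in> End_set (\<cdot>) s"
  shows "s \<cdot> (b t \<cdot> s) = s \<cdot> b t"
  using assms bracket_commutes proj_idem by (metis End_iff assoc)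

lemma End_bracket_props:
  assumes "t \<in> End_set (\<cdot>) s"
  shows "s \<cdot> b t \<cdot> (s \<cdot> b t) = s \<cdot> b t" and "d (s \<cdot> b t) = s \<cdot> b t"
    and "s \<cdot> b t \<in> End_set (\<cdot>) s"
proof -
  have comm: "s \<cdot> b t = b t \<cdot> s" using assms bracket_commutes End_iff by blast
  have "s \<cdot> b t \<cdot> (s \<cdot> b t) = s \<cdot> (b t \<cdot> s) \<cdot> b t" by (simp add: assoc)
  also have "\<dots> = s \<cdot> s \<cdot> (b t \<cdot> b t)" using comm by (metis assoc)
  finally show "s \<cdot> b t \<cdot> (s \<cdot> b t) = s \<cdot> b t"
    using proj_idem bracket_idem by simp
  show "d (s \<cdot> b t) = s \<cdot> b t"
    using comm by (simp add: dagger_mult bracket_self_adjoint proj_self_adjoint)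
  show "s \<cdot> b t \<in> End_set (\<cdot>) s"
    using comm proj_idem unfolding End_iff by (metis assoc)
qed

lemma End_zero: "s \<cdot> (b s \<cdot> s) = zero"
  using End_bracket_eq[of s] End_iff proj_idem mult_bracket by metis

lemma End_kernel_iff:
  assumes x: "x \<in> End_set (\<cdot>) s" and y: "y \<in> End_set (\<cdot>) s"
  shows "x \<cdot> y = zero \<longleftrightarrow> (\<exists>z\<in>End_set (\<cdot>) s. y = s \<cdot> b x \<cdot> z)"
proof
  assume "x \<cdot> y = zero"
  then have "y = s \<cdot> b x \<cdot> y" using bracket_fixes y End_iff by (metis assoc)
  then show "\<exists>z\<in>End_set (\<cdot>) s. y = s \<cdot> b x \<cdot> z" using y by blast
next
  assume "\<exists>z\<in>End_set (\<cdot>) s. y = s \<cdot> b x \<cdot> z"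
  then obtain z where "y = s \<cdot> b x \<cdot> z" by blast
  then have "x \<cdot> y = x \<cdot> s \<cdot> b x \<cdot> z" by (simp add: assoc)
  then show "x \<cdot> y = zero" using x End_iff mult_bracket zero_left by metis
qed

theorem End_foulis: "foulis (End_set (\<cdot>) s) (\<cdot>) s d (\<lambda>t. s \<cdot> (b t \<cdot> s))"
  unfolding foulis_def
proof (intro conjI ballI)
  show "s \<in> End_set (\<cdot>) s" using proj_idem End_iff by blast
  show "d s = s" by (rule proj_self_adjoint)
next
  fix x y assume "x \<in> End_set (\<cdot>) s" "y \<in> End_set (\<cdot>) s"
  then show "x \<cdot> y \<in> End_set (\<cdot>) s" using End_iff assoc by metis
  show "d (x \<cdot> y) = d y \<cdot> d x" by (rule dagger_mult)
  show "x \<cdot> y = s \<cdot> (b s \<cdot> s) \<longleftrightarrow> (\<exists>z\<in>End_set (\<cdot>) s. y = s \<cdot> (b x \<cdot> s) \<cdot> z)"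
    using End_kernel_iff End_bracket_eq End_zero \<open>x \<in> _\<close> \<open>y \<in> _\<close> by simp
next
  fix x y z show "x \<cdot> y \<cdot> z = x \<cdot> (y \<cdot> z)" by (rule assoc)
next
  fix x assume x: "x \<in> End_set (\<cdot>) s"
  then show "d x \<in> End_set (\<cdot>) s"
    using End_iff dagger_mult proj_self_adjoint by metis
  show "s \<cdot> (b x \<cdot> s) \<in> End_set (\<cdot>) s"
    using End_bracket_props(3) End_bracket_eq x by simp
  show "s \<cdot> x = x" "x \<cdot> s = x" using x End_iff by auto
  show "d (d x) = x" by (rule dagger_dagger)
  show "s \<cdot> (b x \<cdot> s) \<cdot> (s \<cdot> (b x \<cdot> s)) = s \<cdot> (b x \<cdot> s)"
    "s \<cdot> (b x \<cdot> s) = d (s \<cdot> (b x \<cdot> s))"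
    using End_bracket_props[OF x] End_bracket_eq[OF x] by simp_all
  show "s \<cdot> (b s \<cdot> s) \<cdot> x = s \<cdot> (b s \<cdot> s)" "x \<cdot> (s \<cdot> (b s \<cdot> s)) = s \<cdot> (b s \<cdot> s)"
    using End_zero zero_left zero_right by simp_all
qed

lemma End_eq_kar_endomorphisms: "End_set (\<cdot>) s = {u. kar_hom (\<cdot>) s s u}"
  by (auto simp: End_set_def kar_hom_def)

lemma kernel_fixes:
  assumes "s \<cdot> g = g" and "u \<cdot> g = zero"
  shows "s \<cdot> b u \<cdot> g = g"
  using assms bracket_fixes by (metis assoc)

lemma kar_dkernel_End_bracket:
  assumes u: "u \<in> End_set (\<cdot>) s"
  shows "kar_dkernel (\<cdot>) d zero s s u (s \<cdot> b u) (s \<cdot> b u)"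
proof -
  let ?p = "s \<cdot> b u"
  note p = End_bracket_props[OF u]
  have up: "u \<cdot> ?p = zero" using u End_iff mult_bracket by (metis assoc)
  have ps: "?p \<cdot> s = ?p" "s \<cdot> ?p = ?p" using p(3) End_iff by blast+
  show ?thesis
    unfolding kar_dkernel_def
  proof (intro conjI allI impI)
    show "kar_obj (\<cdot>) d ?p" using p(1,2) by (simp add: kar_obj_def)
    show "kar_hom (\<cdot>) ?p s ?p" using p(1) ps by (simp add: kar_hom_def)
    show "u \<cdot> ?p = zero" by (rule up)
    show "d ?p \<cdot> ?p = ?p" using p(1,2) by simp
  next
    fix q g assume "kar_obj (\<cdot>) d q \<and> kar_hom (\<cdot>) q s g \<and> u \<cdot> g = zero"
    then have g: "g \<cdot> q = g" "s \<cdot> g = g" "u \<cdot> g = zero" by (auto simp: kar_hom_def)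
    have "?p \<cdot> g = g" using kernel_fixes g(2,3) .
    then show "\<exists>!h. kar_hom (\<cdot>) q ?p h \<and> ?p \<cdot> h = g"
      using g(1) by (auto simp: kar_hom_def)
  qed
qed

text \<open>Every dagger kernel k of u satisfies k k-dagger = s [u]: factoring s [u]
  through k as k h gives k k-dagger = k k-dagger k h = k h.\<close>
lemma kar_dkernel_range:
  assumes u: "u \<in> End_set (\<cdot>) s" and k: "kar_dkernel (\<cdot>) d zero s s u q k"
  shows "k \<cdot> d k = s \<cdot> b u"
proof -
  let ?p = "s \<cdot> b u"
  have k_hom: "k \<cdot> q = k" "s \<cdot> k = k" and uk: "u \<cdot> k = zero" and kk: "d k \<cdot> k = q"
    using k by (auto simp: kar_dkernel_def kar_hom_def)
  have "kar_obj (\<cdot>) d ?p \<and> kar_hom (\<cdot>) ?p s ?p \<and> u \<cdot> ?p = zero"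
    using kar_dkernel_End_bracket[OF u] by (simp add: kar_dkernel_def)
  then obtain h where h: "q \<cdot> h = h" "k \<cdot> h = ?p"
    using k unfolding kar_dkernel_def kar_hom_def by blast
  have "?p \<cdot> k = k" using kernel_fixes k_hom(2) uk .
  then have dk: "d k \<cdot> ?p = d k"
    using End_bracket_props(2)[OF u] dagger_mult by metis
  have "k \<cdot> d k = k \<cdot> (d k \<cdot> (k \<cdot> h))" using dk h(2) by simp
  also have "\<dots> = (k \<cdot> (d k \<cdot> k)) \<cdot> h" by (simp add: assoc)
  also have "\<dots> = ?p" using kk k_hom(1) h(2) by simp
  finally show ?thesis .
qed

text \<open>Whichever dagger kernel the choice operator picks, the categorical bracket of
  an endomorphism agrees with the relative bracket s [u] s.\<close>
theorem kar_end_bracket_eq: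
  assumes u: "u \<in> End_set (\<cdot>) s"
  shows "kar_end_bracket (\<cdot>) d zero s u = s \<cdot> (b u \<cdot> s)"
proof -
  have "\<exists>x q k. kar_dkernel (\<cdot>) d zero s s u q k \<and> x = k \<cdot> d k"
    using kar_dkernel_End_bracket[OF u] by blast
  then have "\<exists>q k. kar_dkernel (\<cdot>) d zero s s u q k \<and> kar_end_bracket (\<cdot>) d zero s u = k \<cdot> d k"
    unfolding kar_end_bracket_def by (rule someI_ex)
  then show ?thesis using kar_dkernel_range[OF u] End_bracket_eq[OF u] by metis
qed

end

theorem mainTheorem17:
  fixes m :: "'a \<Rightarrow> 'a \<Rightarrow> 'a" and e :: 'a and d b :: "'a \<Rightarrow> 'a" and s :: 'a
  assumes "foulis UNIV m e d b"
    and "m s s = s" and "d s = s"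
  shows "foulis (End_set m s) m s d (\<lambda>t. m s (m (b t) s))
    \<and> End_set m s = {u. kar_hom m s s u}
    \<and> (\<forall>u\<in>End_set m s. kar_end_bracket m d (b e) s u = m s (m (b u) s))
    \<and> End_set m e = UNIV \<and> (\<forall>t. m e (m (b t) e) = b t)"
proof -
  interpret foulis_projection m e d b s
    using assms by unfold_locales
  have "End_set m e = UNIV" by (auto simp: End_set_def unit_left unit_right)
  then show ?thesis
    using End_foulis End_eq_kar_endomorphisms kar_end_bracket_eq unit_left unit_right
    by simp
qed

end
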